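(* Let $X,Y$ be Banach spaces, $Z=X\times Y$, and let $P_X:(x,y)\mapsto x$, $P_Y:(x,y)\mapsto y$. Let $C=\begin{pmatrix}A&0\\0&B\end{pmatrix}$ be the generator of a $C_0$ bi-semigroup on $Z$, i.e. $A$ generates a $C_0$ semigroup $T(t)$ ($t\ge 0$) on $X$ and $-B$ generates a $C_0$ semigroup $t\mapsto S(-t)$ ($t\ge0$) on $Y$. Let $M$ be a Hausdorff topological space with a continuous semiflow $(t,\omega)\mapsto t\omega$. Let $L:M\to L(Z,Z)$ satisfy (D1): $(\omega,z)\mapsto L(\omega)z$ is continuous, $\tau(\omega):=\sup_{t\ge0}|L(t\omega)|<\infty$ for every $\omega$, and $\omega\mapsto\tau(\omega)$ is locally bounded. Let $f:M\times Z\to Z$ satisfy (D2): $f$ is continuous, $\varepsilon(\omega):=\sup_{t\ge0}\mathrm{Lip}\,f(t\omega)(\cdot)<\infty$ for every $\omega$, and $\omega\mapsto\varepsilon(\omega)$ is locally bounded. Assume $(\mathrm{UD}_+)$: there are a decomposition $Z=X_\omega\oplus Y_\omega$ with projections $P_\omega$, $P^c_\omega=I-P_\omega$ and operators $T_1$, $S_1$ satisfying the uniform dichotomy on $\mathbb{R}_+$ (see context) with constant $C_1$ and functions $\mu_s,\mu_u:M\to\mathbb{R}$, and such that for all $\omega\in M$, $t_1\le t_2$, $x_1\in X_{t_1\omega}$, $y_2\in Y_{t_2\omega}$, the function $z(t)=T_1(t-t_1,t_1\omega)x_1+S_1(t-t_2,t_2\omega)y_2$, $t\in[t_1,t_2]$,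 satisfies $P_Xz(t)=T(t-t_1)P_Xz(t_1)+\int_{t_1}^tT(t-s)P_XL(s\omega)z(s)\,ds$ and $P_Yz(t)=S(t-t_2)P_Yz(t_2)-\int_t^{t_2}S(t-s)P_YL(s\omega)z(s)\,ds$ for $t\in[t_1,t_2]$. Let $\{H(t,\omega)\}$ be the cocycle correspondence induced by the integral equation $x(t)=T_1(t-t_1,t_1\omega)x(t_1)+\int_{t_1}^tT_1(t-s,s\omega)P_{s\omega}f(s\omega)z(s)\,ds$, $y(t)=S_1(t-t_2,t_2\omega)y(t_2)-\int_t^{t_2}S_1(t-s,s\omega)P^c_{s\omega}f(s\omega)z(s)\,ds$ (see context). Put $\varepsilon'(\omega)=2C_1\varepsilon(\omega)$ and assume $\mu_u(\omega)-\mu_s(\omega)-2\varepsilon'(\omega)>0$. Take $\alpha,\beta,\lambda_u,\lambda_s$ with $\frac{\varepsilon'(\omega)}{\mu_u(\omega)-\mu_s(\omega)-\varepsilon'(\omega)}\le\alpha(\omega),\beta(\omega)<1$, $\lambda_u(\omega)=e^{-\mu_u(\omega)+\varepsilon'(\omega)}$, $\lambda_s(\omega)=e^{\mu_s(\omega)+\varepsilon'(\omega)}$. Then $H(t,s\omega)$ satisfies the (A)$(\alpha(\omega),\lambda_u^t(\omega))$ (B)$(\beta(\omega),\lambda_s^t(\omega))$ condition for all $t,s\ge0$ and $\omega\in M$. Moreover, if $\alpha(\omega),\beta(\omega)\in(\frac{\varepsilon'(\omega)}{\mu_u(\omega)-\mu_s(\omega)-\varepsilon'(\omega)},1)$ and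 $t\ge\epsilon_1>0$, then $H(t,s\omega)$ satisfies (A)$(\alpha(\omega);k_\alpha(\omega)\alpha(\omega),\lambda_u^t(\omega))$ (B)$(\beta(\omega);k_\beta(\omega)\beta(\omega),\lambda_s^t(\omega))$ for any $k_h(\omega)$ with $\frac{(\sigma(\omega)-\frac{\varepsilon'(\omega)}{h(\omega)})e^{-\sigma(\omega)\epsilon_1}+\frac{\varepsilon'(\omega)}{h(\omega)}}{\sigma(\omega)}\le k_h(\omega)<1$, $h=\alpha,\beta$, where $\sigma(\omega)=\mu_u(\omega)-\mu_s(\omega)-\varepsilon'(\omega)$. In particular, if there is a constant $c>1$ with $\inf_\omega\{\mu_u(\omega)-\mu_s(\omega)-(1+c)\varepsilon'(\omega)\}>0$, then $\alpha,\beta,k_\alpha,k_\beta$ can be taken to be constants less than $1$ and $\sup_\omega\lambda_s(\omega)\lambda_u(\omega)<1$; in fact $\sup_\omega\alpha(\omega),\sup_\omega\beta(\omega)$ can be chosen to tend to $0$ as $\sup_\omega\varepsilon'(\omega)\to0$.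
   Context: Uniform dichotomy on $\mathbb{R}_+$: (a) $Z=X_\omega\oplus Y_\omega$ for each $\omega\in M$, with projections $P_\omega$ onto $X_\omega$ along $Y_\omega$, $P^c_\omega=I-P_\omega$, and $(\omega,z)\mapsto P_\omega z$ continuous; (b) $T_1$ is a strongly continuous linear cocycle: $T_1(t,\omega)\in L(X_\omega,X_{t\omega})$, $T_1(0,\omega)=\mathrm{id}$, $T_1(t+s,\omega)=T_1(t,s\omega)T_1(s,\omega)$, $(t,\omega,z)\mapsto T_1(t,\omega)P_\omega z$ continuous; for $s\le t$, $T_1(t-s,s\omega):X_{s\omega}\to X_{t\omega}$. $S_1$ assigns to $t\ge0,\omega\in M$ an operator $S_1(-t,t\omega)\in L(Y_{t\omega},Y_\omega)$ (the second argument is notation indexed by $(t,\omega)$, since the semiflow need not be invertible; for $t\le s$, $S_1(t-s,s\omega)$ denotes $S_1(-(s-t),(s-t)(t\omega)):Y_{s\omega}\to Y_{t\omega}$), with $S_1(0,\omega)=\mathrm{id}$, $S_1(-(t+s),(t+s)\omega)=S_1(-s,s\omega)S_1(-t,t(s\omega))$, and $(t,\omega,z)\mapsto S_1(-t,t\omega)P^c_{t\omega}z$ continuous; (c) $\sup_\omega|P_\omega|\le C_1$, $\sup_\omega|P^c_\omega|\le C_1$; (d) $|T_1(t,r\omega)|\le e^{\mu_s(\omega)t}$ and $|S_1(-t,t(r\omega))|\le e^{-\mu_u(\omega)t}$ for all $t,r\ge0$, $\omega\in M$. Induced cocycle correspondence: for $s\ge0$, $\omega\in M$, $x_1\in X_\omega$,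 $y_2\in Y_{s\omega}$ the integral equation above (with $t_1=0,t_2=s$) has a unique continuous solution $z(t)=x(t)+y(t)$, $x(t)\in X_{t\omega}$, $y(t)\in Y_{t\omega}$, $t\in[0,s]$, with $x(0)=x_1$, $y(s)=y_2$; set $F_{s,\omega}(x_1,y_2)=x(s)$, $G_{s,\omega}(x_1,y_2)=y(0)$ and define the correspondence $H(s,\omega):X_\omega\oplus Y_\omega\to X_{s\omega}\oplus Y_{s\omega}$ by $(x_2,y_2)\in H(s,\omega)(x_1,y_1)$ iff $y_1=G_{s,\omega}(x_1,y_2)$ and $x_2=F_{s,\omega}(x_1,y_2)$. (A)(B) condition: a correspondence $H$ (a nonempty subset $\mathrm{Graph}H$ of $(X_1\times Y_1)\times(X_2\times Y_2)$, metric spaces with distances written $|u-v|$) satisfies (A)$(\alpha;\alpha',\lambda_u)$ (B)$(\beta;\beta',\lambda_s)$ if for all $(x_1,y_1)\times(x_2,y_2)$, $(x_1',y_1')\times(x_2',y_2')\in\mathrm{Graph}H$: (A1) $|x_1-x_1'|\le\alpha|y_1-y_1'|$ implies $|x_2-x_2'|\le\alpha'|y_2-y_2'|$; (A2) $|x_1-x_1'|\le\alpha|y_1-y_1'|$ implies $|y_1-y_1'|\le\lambda_u|y_2-y_2'|$; (B1) $|y_2-y_2'|\le\beta|x_2-x_2'|$ implies $|y_1-y_1'|\le\beta'|x_1-x_1'|$; (B2) $|y_2-y_2'|\le\beta|x_2-x_2'|$ implies $|x_2-x_2'|\le\lambda_s|x_1-x_1'|$. (A)$(\alpha,\lambda_u)$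 (B)$(\beta,\lambda_s)$ means $\alpha'=\alpha$, $\beta'=\beta$. Here the fibers carry the norm of $Z$. *)

theory Defs
  imports "HOL-Analysis.Analysis"
begin

text \<open>Best Lipschitz constant of a map (meaningful when the map is Lipschitz).\<close>
definition lipc :: "('a::metric_space \<Rightarrow> 'b::metric_space) \<Rightarrow> real" where
  "lipc g = Inf {K. lipschitz_on K UNIV g}"

definition projc :: "('m \<Rightarrow> ('z::real_normed_vector \<Rightarrow>\<^sub>L 'z)) \<Rightarrow> 'm \<Rightarrow> 'z \<Rightarrow> 'z" where
  "projc P \<omega> z = z - P \<omega> z"

definition Xsp :: "('m \<Rightarrow> ('z::real_normed_vector \<Rightarrow>\<^sub>L 'z)) \<Rightarrow> 'm \<Rightarrow> 'z set" where
  "Xsp P \<omega> = range (blinfun_apply (P \<omega>))"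

definition Ysp :: "('m \<Rightarrow> ('z::real_normed_vector \<Rightarrow>\<^sub>L 'z)) \<Rightarrow> 'm \<Rightarrow> 'z set" where
  "Ysp P \<omega> = range (projc P \<omega>)"

text \<open>Notation: \<open>S1 t \<omega>\<close> stands for the paper's \<open>S_1(-t, t\<omega>) : Y_{t\<omega>} \<rightarrow> Y_\<omega>\<close>;
  hence the paper's \<open>S_1(t-s, s\<omega>)\<close> (for \<open>t \<le> s\<close>) is \<open>S1 (s-t) (\<phi> t \<omega>)\<close>.
  \<open>T1 t \<omega>\<close> is \<open>T_1(t,\<omega>)\<close>, \<open>\<phi> t \<omega>\<close> is \<open>t\<omega>\<close>.\<close>

text \<open>Continuous solution on \<open>[0,s]\<close> of the nonlinear integral equation with \<open>t_1=0, t_2=s\<close>,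
  where \<open>x(t) = P_{t\<omega>} z(t)\<close>, \<open>y(t) = P^c_{t\<omega>} z(t)\<close>.\<close>
definition is_sol ::
  "(real \<Rightarrow> 'm \<Rightarrow> 'm) \<Rightarrow> ('m \<Rightarrow> ('z::real_normed_vector \<Rightarrow>\<^sub>L 'z)) \<Rightarrow>
   (real \<Rightarrow> 'm \<Rightarrow> ('z \<Rightarrow>\<^sub>L 'z)) \<Rightarrow> (real \<Rightarrow> 'm \<Rightarrow> ('z \<Rightarrow>\<^sub>L 'z)) \<Rightarrow>
   ('m \<Rightarrow> 'z \<Rightarrow> 'z) \<Rightarrow> real \<Rightarrow> 'm \<Rightarrow> (real \<Rightarrow> 'z) \<Rightarrow> bool" where
  "is_sol \<phi> P T1 S1 f s \<omega> z \<longleftrightarrow>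
     continuous_on {0..s} z \<and>
     (\<forall>t\<in>{0..s}.
        ((\<lambda>r. T1 (t - r) (\<phi> r \<omega>) (P (\<phi> r \<omega>) (f (\<phi> r \<omega>) (z r))))
           has_integral (P (\<phi> t \<omega>) (z t) - T1 t \<omega> (P \<omega> (z 0)))) {0..t} \<and>
        ((\<lambda>r. S1 (r - t) (\<phi> t \<omega>) (projc P (\<phi> r \<omega>) (f (\<phi> r \<omega>) (z r))))
           has_integral (S1 (s - t) (\<phi> t \<omega>) (projc P (\<phi> s \<omega>) (z s)) - projc P (\<phi> t \<omega>) (z t))) {t..s})"

definition corr ::
  "(real \<Rightarrow> 'm \<Rightarrow> 'm) \<Rightarrow> ('m \<Rightarrow> ('z::real_normed_vector \<Rightarrow>\<^sub>L 'z)) \<Rightarrow>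
   (real \<Rightarrow> 'm \<Rightarrow> ('z \<Rightarrow>\<^sub>L 'z)) \<Rightarrow> (real \<Rightarrow> 'm \<Rightarrow> ('z \<Rightarrow>\<^sub>L 'z)) \<Rightarrow>
   ('m \<Rightarrow> 'z \<Rightarrow> 'z) \<Rightarrow> real \<Rightarrow> 'm \<Rightarrow> (('z \<times> 'z) \<times> ('z \<times> 'z)) set" where
  "corr \<phi> P T1 S1 f s \<omega> =
     {((x1, y1), (x2, y2)) | x1 y1 x2 y2. \<exists>z. is_sol \<phi> P T1 S1 f s \<omega> z \<and>
        P \<omega> (z 0) = x1 \<and> projc P \<omega> (z 0) = y1 \<and>
        P (\<phi> s \<omega>) (z s) = x2 \<and> projc P (\<phi> s \<omega>) (z s) = y2}"

definition AB_cond ::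
  "((('a::real_normed_vector) \<times> ('b::real_normed_vector)) \<times> (('c::real_normed_vector) \<times> ('d::real_normed_vector))) set
   \<Rightarrow> real \<Rightarrow> real \<Rightarrow> real \<Rightarrow> real \<Rightarrow> real \<Rightarrow> real \<Rightarrow> bool" where
  "AB_cond G \<alpha> \<alpha>' lamu \<beta> \<beta>' lams \<longleftrightarrow>
     (\<forall>x1 y1 x2 y2 x1' y1' x2' y2'.
        ((x1, y1), (x2, y2)) \<in> G \<longrightarrow> ((x1', y1'), (x2', y2')) \<in> G \<longrightarrow>
        (norm (x1 - x1') \<le> \<alpha> * norm (y1 - y1') \<longrightarrow>
            norm (x2 - x2') \<le> \<alpha>' * norm (y2 - y2') \<and> norm (y1 - y1') \<le> lamu * norm (y2 - y2')) \<and>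
        (norm (y2 - y2') \<le> \<beta> * norm (x2 - x2') \<longrightarrow>
            norm (y1 - y1') \<le> \<beta>' * norm (x1 - x1') \<and> norm (x2 - x2') \<le> lams * norm (x1 - x1')))"

end

theory Submission
  imports Defs
begin

(*
  The difference of two solutions, split by the projections into a stable part of norm u and
  an unstable part of norm v, satisfies the scalar inequalities
    u r <= exp (a r) u 0 + delta * int_0^r exp (a (r - q)) (u q + v q) dq,
    v r <= exp (-b (t - r)) v t + delta * int_r^t exp (-b (q - r)) (u q + v q) dq
  with a = mu_s, b = mu_u and delta = C1 Lip f.  Let U, V (u_majorant, v_majorant) solve the
  linear equations obtained by turning these inequalities into equalities, so u <= U and
  v <= V.  If u 0 <= alpha v 0, a comparison argument for U - gamma V gives U <= gamma V, where
  gamma' = sigma (k - gamma), gamma 0 = alpha, with sigma = b - a - 2 delta and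
  k = 2 delta / sigma: the cone slope relaxes from alpha towards k, which is (A1).  Inside the
  cone V' >= (b - 2 delta) V, which is (A2).  Reversing time exchanges u and v and replaces
  (a, b) by (-b, -a), so (B) is (A) for the reversed pair.
*)

lemma integral_reflect_shift_real:
  fixes f :: "real \<Rightarrow> 'a::real_normed_vector"
  shows "integral {a..b} (\<lambda>x. f (c - x)) = integral {c - b..c - a} f"
proof -
  have "integral {a..b} (\<lambda>x. f (c - x)) = integral {a..b} ((\<lambda>y. f (- y)) \<circ> (+) (- c))"
    by (simp add: o_def)
  also have "\<dots> = integral {a - c..b - c} (\<lambda>y. f (- y))"
    by (simp add: integral_shift_Icc_real)
  also have "\<dots> = integral {c - b..c - a} f"
    using Henstock_Kurzweil_Integration.integral_reflect_real[where a = "c - b" and b = "c - a"]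
    by simp
  finally show ?thesis .
qed

lemma norm_has_integral_le_integral:
  fixes F :: "real \<Rightarrow> 'a::banach"
  assumes "(F has_integral I) {c..d}" "continuous_on {c..d} g"
    and "\<And>q. q \<in> {c..d} \<Longrightarrow> norm (F q) \<le> g q"
  shows "norm I \<le> integral {c..d} g"
  using integral_norm_bound_integral[of F "{c..d}" g] assms integrable_continuous_interval
  by (metis has_integral_integrable integral_unique)

lemma nonpos_by_differential_inequality:
  fixes g g' :: "real \<Rightarrow> real"
  assumes cont: "continuous_on {0..t} g"
    and deriv: "\<And>x. 0 < x \<Longrightarrow> x < t \<Longrightarrow> (g has_real_derivative g' x) (at x)"
    and growth: "\<And>x. 0 < x \<Longrightarrow> x < t \<Longrightarrow> 0 < g x \<Longrightarrow> g' x \<le> K * g x"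
    and start: "g 0 \<le> 0" and r: "r \<in> {0..t}"
  shows "g r \<le> 0"
proof (rule ccontr)
  assume "\<not> g r \<le> 0"
  then have gr: "0 < g r" by simp
  have cont_r: "continuous_on {0..r} g"
    using cont r by (auto intro: continuous_on_subset)
  define Z where "Z = {0..r} \<inter> g -` {..0}"
  have "closed Z"
    unfolding Z_def by (rule continuous_closed_preimage[OF cont_r]) auto
  moreover have "0 \<in> Z" and bdd: "bdd_above Z"
    using start r by (auto simp: Z_def)
  ultimately have "Sup Z \<in> Z"
    using closed_contains_Sup by blast
  define r0 where "r0 = Sup Z"
  have r0: "0 \<le> r0" "r0 \<le> r" "g r0 \<le> 0"
    using \<open>Sup Z \<in> Z\<close> by (auto simp: Z_def r0_def)
  have pos: "0 < g q" if "r0 < q" "q \<le> r" for q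
  proof (rule ccontr)
    assume "\<not> 0 < g q"
    then have "q \<in> Z" using that r0 by (auto simp: Z_def)
    then have "q \<le> r0" unfolding r0_def using bdd by (rule cSup_upper)
    then show False using that by simp
  qed
  \<comment> \<open>On \<open>]r0, r]\<close> the function \<open>g\<close> is positive, so \<open>exp (- K q) * g q\<close> decreases there.\<close>
  define h where "h q = exp (- K * q) * g q" for q
  have "h r \<le> h r0"
  proof (rule DERIV_nonpos_imp_decreasing_open[of r0 r h])
    show "continuous_on {r0..r} h"
      unfolding h_def using r0 by (intro continuous_intros continuous_on_subset[OF cont_r]) auto
    fix x assume x: "r0 < x" "x < r"
    have "(h has_real_derivative exp (- K * x) * (g' x - K * g x)) (at x)"
      unfolding h_def using deriv[of x] x r0 r
      by (auto intro!: derivative_eq_intros simp: algebra_simps)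
    moreover have "g' x - K * g x \<le> 0"
      using growth[of x] pos[of x] x r0 r by auto
    ultimately show "\<exists>y. (h has_real_derivative y) (at x) \<and> y \<le> 0"
      by (intro exI[of _ "exp (- K * x) * (g' x - K * g x)"]) (simp add: mult_nonneg_nonpos)
  qed (use r0 in auto)
  moreover have "h r0 \<le> 0" "0 < h r"
    using r0 gr by (auto simp: h_def mult_nonneg_nonpos)
  ultimately show False by simp
qed

lemma lipc_le:
  assumes "lipschitz_on K UNIV g"
  shows "lipc g \<le> K"
proof -
  have "bdd_below {K. lipschitz_on K UNIV g}"
    by (rule bdd_belowI[of _ 0]) (auto intro: lipschitz_on_nonneg)
  then show ?thesis
    unfolding lipc_def using assms by (intro cInf_lower) auto
qed

lemma lipschitz_on_lipc:
  fixes g :: "'a::metric_space \<Rightarrow> 'b::metric_space"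
  assumes "lipschitz_on K UNIV g"
  shows "lipschitz_on (lipc g) UNIV g"
proof (rule lipschitz_onI)
  have ne: "{K. lipschitz_on K UNIV g} \<noteq> {}" using assms by blast
  show "0 \<le> lipc g"
    unfolding lipc_def by (rule cInf_greatest[OF ne]) (auto intro: lipschitz_on_nonneg)
  fix x y :: 'a
  show "dist (g x) (g y) \<le> lipc g * dist x y"
  proof (cases "x = y")
    case False
    have "dist (g x) (g y) / dist x y \<le> lipc g"
      unfolding lipc_def
    proof (rule cInf_greatest[OF ne])
      fix K assume "K \<in> {K. lipschitz_on K UNIV g}"
      then have "dist (g x) (g y) \<le> K * dist x y" by (auto intro: lipschitz_onD)
      then show "dist (g x) (g y) / dist x y \<le> K" using False by (simp add: divide_le_eq)
    qed
    then show ?thesis using False by (simp add: divide_le_eq)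
  qed simp
qed

lemma lipschitz_on_SUP_lipc:
  fixes g :: "'i \<Rightarrow> 'a::metric_space \<Rightarrow> 'b::metric_space"
  assumes "\<And>i. i \<in> A \<Longrightarrow> lipschitz_on K UNIV (g i)" and "i \<in> A"
  shows "lipschitz_on (SUP i\<in>A. lipc (g i)) UNIV (g i)"
proof -
  have "lipc (g i) \<le> (SUP i\<in>A. lipc (g i))"
    using assms lipc_le by (intro cSUP_upper bdd_aboveI2[of _ _ K]) auto
  then show ?thesis
    by (rule lipschitz_on_le[OF lipschitz_on_lipc[OF assms(1)[OF assms(2)]]])
qed

section \<open>Cone slopes\<close>

definition cone_slope :: "real \<Rightarrow> real \<Rightarrow> real \<Rightarrow> real \<Rightarrow> real" where
  "cone_slope \<sigma> k \<alpha> t = exp (- \<sigma> * t) * \<alpha> + k * (1 - exp (- \<sigma> * t))"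

lemma cone_slope_0 [simp]: "cone_slope \<sigma> k \<alpha> 0 = \<alpha>"
  by (simp add: cone_slope_def)

lemma cone_slope_has_derivative:
  "(cone_slope \<sigma> k \<alpha> has_real_derivative \<sigma> * (k - cone_slope \<sigma> k \<alpha> t)) (at t)"
  unfolding cone_slope_def[abs_def]
  by (auto intro!: derivative_eq_intros simp: algebra_simps)

lemma cone_slope_eq: "cone_slope \<sigma> k \<alpha> t = k + (\<alpha> - k) * exp (- \<sigma> * t)"
  by (simp add: cone_slope_def algebra_simps)

lemma cone_slope_between:
  assumes "0 \<le> \<sigma>" "0 \<le> t" "k \<le> \<alpha>"
  shows "k \<le> cone_slope \<sigma> k \<alpha> t" "cone_slope \<sigma> k \<alpha> t \<le> \<alpha>"
proof -
  have "exp (- \<sigma> * t) \<le> 1" using assms by simp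
  then have "(\<alpha> - k) * exp (- \<sigma> * t) \<le> \<alpha> - k"
    using assms by (intro mult_left_le) auto
  then show "k \<le> cone_slope \<sigma> k \<alpha> t" "cone_slope \<sigma> k \<alpha> t \<le> \<alpha>"
    using assms by (auto simp: cone_slope_eq)
qed

lemma cone_slope_le_mult:
  assumes \<sigma>: "0 < \<sigma>" and e: "0 \<le> e" "e / \<sigma> < \<alpha>" and t: "\<tau> \<le> t"
    and \<kappa>: "((\<sigma> - e / \<alpha>) * exp (- \<sigma> * \<tau>) + e / \<alpha>) / \<sigma> \<le> \<kappa>"
  shows "cone_slope \<sigma> (e / \<sigma>) \<alpha> t \<le> \<kappa> * \<alpha>"
proof -
  have \<alpha>: "0 < \<alpha>" using e \<sigma> by (smt (verit) divide_nonneg_pos)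
  have "cone_slope \<sigma> (e / \<sigma>) \<alpha> t \<le> e / \<sigma> + (\<alpha> - e / \<sigma>) * exp (- \<sigma> * \<tau>)"
    unfolding cone_slope_eq using e \<sigma> t by (intro add_left_mono mult_left_mono) auto
  also have "\<dots> = ((\<sigma> - e / \<alpha>) * exp (- \<sigma> * \<tau>) + e / \<alpha>) / \<sigma> * \<alpha>"
    using \<sigma> \<alpha> by (simp add: field_simps)
  also have "\<dots> \<le> \<kappa> * \<alpha>"
    using \<kappa> \<alpha> by (intro mult_right_mono) auto
  finally show ?thesis .
qed

text \<open>The derivative of \<open>U - \<gamma> V\<close> when \<open>U' = a U + \<delta> W\<close>, \<open>V' = b V - \<delta> W\<close> and
  \<open>\<gamma>' = 2 \<delta> - (b - a - 2 \<delta>) \<gamma>\<close>, where \<open>W = u + v \<le> U + V\<close>.\<close>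

lemma cone_growth_bound:
  fixes a b \<delta> \<gamma> U V W :: real
  assumes \<gamma>: "0 \<le> \<gamma>" "\<gamma> \<le> 1" and "0 \<le> \<delta>" "0 \<le> V" "W \<le> U + V" and pos: "0 < U - \<gamma> * V"
  shows "a * U + \<delta> * W - (\<gamma> * (b * V - \<delta> * W) + (2 * \<delta> - (b - a - 2 * \<delta>) * \<gamma>) * V)
    \<le> (\<bar>a\<bar> + 2 * \<delta>) * (U - \<gamma> * V)"
proof -
  have "(1 + \<gamma>) * \<delta> * W \<le> (1 + \<gamma>) * \<delta> * (U + V)"
    using assms by (intro mult_left_mono) auto
  moreover have "\<delta> * (\<gamma> * \<gamma> - 1) * V \<le> 0"
    using assms mult_le_one[of \<gamma> \<gamma>] by (intro mult_nonpos_nonneg mult_nonneg_nonpos) auto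
  moreover have "(1 + \<gamma>) * \<delta> \<le> 2 * \<delta>"
    using assms by (intro mult_right_mono) auto
  then have "(a + (1 + \<gamma>) * \<delta>) * (U - \<gamma> * V) \<le> (\<bar>a\<bar> + 2 * \<delta>) * (U - \<gamma> * V)"
    using pos by (intro mult_right_mono) auto
  ultimately show ?thesis
    by (auto simp: algebra_simps)
qed

lemma uniform_cone_ratio:
  fixes e \<sigma> :: "'m \<Rightarrow> real"
  assumes e: "\<And>\<omega>. 0 \<le> e \<omega>" and gap: "\<And>\<omega>. c * e \<omega> + d \<le> \<sigma> \<omega>" and c: "1 < c" and d: "0 < d"
  shows "\<And>\<omega>. e \<omega> / \<sigma> \<omega> \<le> (SUP \<omega>. e \<omega> / \<sigma> \<omega>)" and "(SUP \<omega>. e \<omega> / \<sigma> \<omega>) < 1"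
proof -
  have le: "e \<omega> / \<sigma> \<omega> \<le> 1 / c" for \<omega>
  proof -
    have "0 < \<sigma> \<omega>" using gap[of \<omega>] e[of \<omega>] c d by (smt (verit) mult_nonneg_nonneg)
    then show ?thesis
      using gap[of \<omega>] c d by (simp add: field_simps)
  qed
  then show "e \<omega> / \<sigma> \<omega> \<le> (SUP \<omega>. e \<omega> / \<sigma> \<omega>)" for \<omega>
    by (intro cSUP_upper bdd_aboveI2) auto
  have "(SUP \<omega>. e \<omega> / \<sigma> \<omega>) \<le> 1 / c"
    using le by (intro cSUP_least) auto
  moreover have "1 / c < 1" using c by simp
  ultimately show "(SUP \<omega>. e \<omega> / \<sigma> \<omega>) < 1" by linarith
qed

lemma uniform_contraction_factor:
  fixes e \<sigma> :: "'m \<Rightarrow> real"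
  assumes e: "\<And>\<omega>. 0 \<le> e \<omega>" and \<sigma>: "\<And>\<omega>. d \<le> \<sigma> \<omega>" and d: "0 < d"
    and m: "\<And>\<omega>. e \<omega> / \<sigma> \<omega> \<le> m" "m < h" and \<epsilon>1: "0 < \<epsilon>1"
  shows "\<exists>\<kappa><1. \<forall>\<omega>. ((\<sigma> \<omega> - e \<omega> / h) * exp (- \<sigma> \<omega> * \<epsilon>1) + e \<omega> / h) / \<sigma> \<omega> \<le> \<kappa>"
proof (intro exI conjI allI)
  have "0 \<le> m" using m(1)[of undefined] e \<sigma> d by (smt (verit) divide_nonneg_pos)
  then have h: "0 < h" "0 < 1 - m / h" using m by (auto simp: field_simps)
  show "1 - (1 - exp (- d * \<epsilon>1)) * (1 - m / h) < 1"
    using h d \<epsilon>1 by simp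
  fix \<omega>
  have "0 < \<sigma> \<omega>" using \<sigma> d by (smt (verit))
  have "exp (- \<sigma> \<omega> * \<epsilon>1) \<le> exp (- d * \<epsilon>1)"
    using \<sigma>[of \<omega>] \<epsilon>1 by (simp add: mult_right_mono)
  moreover have "e \<omega> / (\<sigma> \<omega> * h) \<le> m / h"
    using m(1)[of \<omega>] h by (simp add: divide_right_mono flip: divide_divide_eq_left)
  ultimately have "(1 - exp (- d * \<epsilon>1)) * (1 - m / h) \<le> (1 - exp (- \<sigma> \<omega> * \<epsilon>1)) * (1 - e \<omega> / (\<sigma> \<omega> * h))"
    using h \<open>0 < \<sigma> \<omega>\<close> \<epsilon>1 by (intro mult_mono) auto
  moreover have "((\<sigma> \<omega> - e \<omega> / h) * exp (- \<sigma> \<omega> * \<epsilon>1) + e \<omega> / h) / \<sigma> \<omega>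
      = 1 - (1 - exp (- \<sigma> \<omega> * \<epsilon>1)) * (1 - e \<omega> / (\<sigma> \<omega> * h))"
    using \<open>0 < \<sigma> \<omega>\<close> h by (simp add: field_simps)
  ultimately show "((\<sigma> \<omega> - e \<omega> / h) * exp (- \<sigma> \<omega> * \<epsilon>1) + e \<omega> / h) / \<sigma> \<omega>
      \<le> 1 - (1 - exp (- d * \<epsilon>1)) * (1 - m / h)"
    by linarith
qed

section \<open>Scalar dichotomy inequalities\<close>

locale scalar_dichotomy =
  fixes u v :: "real \<Rightarrow> real" and a b \<delta> t :: real
  assumes t_nonneg: "0 \<le> t" and \<delta>_nonneg: "0 \<le> \<delta>"
    and cont_u: "continuous_on {0..t} u" and cont_v: "continuous_on {0..t} v"
    and u_nonneg: "\<And>r. r \<in> {0..t} \<Longrightarrow> 0 \<le> u r"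
    and v_nonneg: "\<And>r. r \<in> {0..t} \<Longrightarrow> 0 \<le> v r"
    and u_le: "\<And>r. r \<in> {0..t} \<Longrightarrow>
      u r \<le> exp (a * r) * u 0 + \<delta> * integral {0..r} (\<lambda>q. exp (a * (r - q)) * (u q + v q))"
    and v_le: "\<And>r. r \<in> {0..t} \<Longrightarrow>
      v r \<le> exp (- b * (t - r)) * v t + \<delta> * integral {r..t} (\<lambda>q. exp (- b * (q - r)) * (u q + v q))"
    and gap: "0 < b - a - 2 * \<delta>"
begin

abbreviation gap_rate :: real where "gap_rate \<equiv> b - a - 2 * \<delta>"

abbreviation limit_slope :: real where "limit_slope \<equiv> 2 * \<delta> / gap_rate"

lemma time_reversed: "scalar_dichotomy (\<lambda>r. v (t - r)) (\<lambda>r. u (t - r)) (- b) (- a) \<delta> t"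
proof
  have refl: "(\<lambda>r. t - r) ` {0..t} \<subseteq> {0..t}" by auto
  show "continuous_on {0..t} (\<lambda>r. v (t - r))" "continuous_on {0..t} (\<lambda>r. u (t - r))"
    by (intro continuous_on_compose2[OF cont_v _ refl] continuous_on_compose2[OF cont_u _ refl]
        continuous_intros)+
  fix r assume r: "r \<in> {0..t}"
  then have tr: "t - r \<in> {0..t}" by auto
  then show "0 \<le> v (t - r)" "0 \<le> u (t - r)" by (auto intro: u_nonneg v_nonneg)
  have "integral {0..r} (\<lambda>q. exp (- b * (r - q)) * (v (t - q) + u (t - q)))
      = integral {t - r..t} (\<lambda>q. exp (- b * (q - (t - r))) * (u q + v q))"
    using integral_reflect_shift_real[of 0 r "\<lambda>q. exp (- b * (q - (t - r))) * (u q + v q)" t]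
    by (simp add: algebra_simps)
  then show "v (t - r) \<le> exp (- b * r) * v (t - 0)
      + \<delta> * integral {0..r} (\<lambda>q. exp (- b * (r - q)) * (v (t - q) + u (t - q)))"
    using v_le[OF tr] by simp
  have "integral {r..t} (\<lambda>q. exp (- (- a) * (q - r)) * (v (t - q) + u (t - q)))
      = integral {0..t - r} (\<lambda>q. exp (a * (t - r - q)) * (u q + v q))"
    using integral_reflect_shift_real[of r t "\<lambda>q. exp (a * (t - r - q)) * (u q + v q)" t]
    by (simp add: algebra_simps)
  then show "u (t - r) \<le> exp (- (- a) * (t - r)) * u (t - t)
      + \<delta> * integral {r..t} (\<lambda>q. exp (- (- a) * (q - r)) * (v (t - q) + u (t - q)))"
    using u_le[OF tr] by simp
qed (use t_nonneg \<delta>_nonneg gap in auto)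

definition weighted_integral :: "real \<Rightarrow> real \<Rightarrow> real" where
  "weighted_integral c r = integral {0..r} (\<lambda>q. exp (- c * q) * (u q + v q))"

definition u_majorant :: "real \<Rightarrow> real" where
  "u_majorant r = exp (a * r) * (u 0 + \<delta> * weighted_integral a r)"

definition v_majorant :: "real \<Rightarrow> real" where
  "v_majorant r =
     exp (b * r) * (exp (- b * t) * v t + \<delta> * (weighted_integral b t - weighted_integral b r))"

lemma weighted_integral_has_derivative:
  assumes "r \<in> {0..t}"
  shows "(weighted_integral c has_real_derivative exp (- c * r) * (u r + v r)) (at r within {0..t})"
  unfolding weighted_integral_def[abs_def]
  by (rule integral_has_real_derivative) (use assms in \<open>auto intro!: continuous_intros cont_u cont_v\<close>)

lemma u_majorant_has_derivative:
  assumes "0 < r" "r < t"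
  shows "(u_majorant has_real_derivative a * u_majorant r + \<delta> * (u r + v r)) (at r)"
proof -
  have "(weighted_integral a has_real_derivative exp (- a * r) * (u r + v r)) (at r)"
    using weighted_integral_has_derivative[of r a] assms by (simp add: at_within_Icc_at)
  then show ?thesis
    unfolding u_majorant_def[abs_def]
    by (auto intro!: derivative_eq_intros simp: algebra_simps simp flip: exp_add)
qed

lemma v_majorant_has_derivative:
  assumes "0 < r" "r < t"
  shows "(v_majorant has_real_derivative b * v_majorant r - \<delta> * (u r + v r)) (at r)"
proof -
  have "(weighted_integral b has_real_derivative exp (- b * r) * (u r + v r)) (at r)"
    using weighted_integral_has_derivative[of r b] assms by (simp add: at_within_Icc_at)
  then show ?thesis
    unfolding v_majorant_def[abs_def]
    by (auto intro!: derivative_eq_intros simp: algebra_simps simp flip: exp_add)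
qed

lemma continuous_majorants: "continuous_on {0..t} u_majorant" "continuous_on {0..t} v_majorant"
  using DERIV_continuous_on[OF weighted_integral_has_derivative]
  unfolding u_majorant_def[abs_def] v_majorant_def[abs_def]
  by (auto intro!: continuous_intros)

lemma u_majorant_0: "u_majorant 0 = u 0"
  by (simp add: u_majorant_def weighted_integral_def)

lemma v_majorant_t: "v_majorant t = v t"
  by (simp add: v_majorant_def flip: exp_add)

lemma u_le_majorant:
  assumes r: "r \<in> {0..t}"
  shows "u r \<le> u_majorant r"
proof -
  have "integral {0..r} (\<lambda>q. exp (a * (r - q)) * (u q + v q))
      = integral {0..r} (\<lambda>q. exp (a * r) * (exp (- a * q) * (u q + v q)))"
    by (rule integral_cong) (simp add: algebra_simps flip: exp_add)
  also have "\<dots> = exp (a * r) * weighted_integral a r"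
    by (simp add: weighted_integral_def)
  finally show ?thesis
    using u_le[OF r] by (simp add: u_majorant_def algebra_simps)
qed

lemma v_le_majorant:
  assumes r: "r \<in> {0..t}"
  shows "v r \<le> v_majorant r"
proof -
  have "(\<lambda>q. exp (- b * q) * (u q + v q)) integrable_on {0..t}"
    by (intro integrable_continuous_interval continuous_intros cont_u cont_v)
  then have split: "integral {r..t} (\<lambda>q. exp (- b * q) * (u q + v q))
      = weighted_integral b t - weighted_integral b r"
    using Henstock_Kurzweil_Integration.integral_combine[of 0 r t] r
    by (simp add: weighted_integral_def algebra_simps)
  have "integral {r..t} (\<lambda>q. exp (- b * (q - r)) * (u q + v q))
      = integral {r..t} (\<lambda>q. exp (b * r) * (exp (- b * q) * (u q + v q)))"
    by (rule integral_cong) (simp add: algebra_simps flip: exp_add)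
  also have "\<dots> = exp (b * r) * (weighted_integral b t - weighted_integral b r)"
    by (simp only: Henstock_Kurzweil_Integration.integral_mult_right split)
  finally have int_eq: "integral {r..t} (\<lambda>q. exp (- b * (q - r)) * (u q + v q))
      = exp (b * r) * (weighted_integral b t - weighted_integral b r)" .
  have exp_eq: "exp (- b * (t - r)) = exp (b * r) * exp (- b * t)"
    by (simp add: algebra_simps flip: exp_add)
  show ?thesis
    using v_le[OF r] unfolding int_eq exp_eq v_majorant_def by (simp add: algebra_simps)
qed

lemma cone_slope_unit_interval:
  assumes "limit_slope \<le> \<alpha>" "\<alpha> \<le> 1" "0 \<le> x"
  shows "0 \<le> cone_slope gap_rate limit_slope \<alpha> x"
    "cone_slope gap_rate limit_slope \<alpha> x \<le> 1"
proof -
  have "0 \<le> limit_slope" using gap \<delta>_nonneg by simp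
  then show "0 \<le> cone_slope gap_rate limit_slope \<alpha> x"
    "cone_slope gap_rate limit_slope \<alpha> x \<le> 1"
    using cone_slope_between[of gap_rate x limit_slope \<alpha>] gap assms
    by auto
qed

lemma majorants_in_cone:
  assumes \<alpha>: "limit_slope \<le> \<alpha>" "\<alpha> \<le> 1" and start: "u 0 \<le> \<alpha> * v 0"
    and r: "r \<in> {0..t}"
  shows "u_majorant r \<le> cone_slope gap_rate limit_slope \<alpha> r * v_majorant r"
proof -
  define \<gamma> where "\<gamma> = cone_slope gap_rate limit_slope \<alpha>"
  have \<gamma>_01: "0 \<le> \<gamma> x \<and> \<gamma> x \<le> 1" if "0 \<le> x" for x
    using cone_slope_unit_interval[OF \<alpha> that] by (simp add: \<gamma>_def)
  have \<gamma>_deriv: "(\<gamma> has_real_derivative 2 * \<delta> - gap_rate * \<gamma> x) (at x)" for x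
    using cone_slope_has_derivative[of gap_rate limit_slope \<alpha> x] gap
    by (simp add: \<gamma>_def right_diff_distrib)
  have "u_majorant r - \<gamma> r * v_majorant r \<le> 0"
  proof (rule nonpos_by_differential_inequality[OF _ _ _ _ r, where K = "\<bar>a\<bar> + 2 * \<delta>"])
    show "continuous_on {0..t} (\<lambda>r. u_majorant r - \<gamma> r * v_majorant r)"
      unfolding \<gamma>_def cone_slope_def by (intro continuous_intros continuous_majorants)
    show "u_majorant 0 - \<gamma> 0 * v_majorant 0 \<le> 0"
      using start v_le_majorant[of 0] t_nonneg \<gamma>_01[of 0] mult_left_mono[of "v 0" "v_majorant 0" \<alpha>]
      by (simp add: \<gamma>_def u_majorant_0)
    fix x assume x: "0 < x" "x < t"
    show "((\<lambda>r. u_majorant r - \<gamma> r * v_majorant r) has_real_derivative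
        a * u_majorant x + \<delta> * (u x + v x)
        - (\<gamma> x * (b * v_majorant x - \<delta> * (u x + v x)) + (2 * \<delta> - gap_rate * \<gamma> x) * v_majorant x)) (at x)"
      by (intro DERIV_diff DERIV_mult' u_majorant_has_derivative v_majorant_has_derivative \<gamma>_deriv x)
    assume "0 < u_majorant x - \<gamma> x * v_majorant x"
    moreover have "u x + v x \<le> u_majorant x + v_majorant x" "0 \<le> v_majorant x"
      using u_le_majorant[of x] v_le_majorant[of x] v_nonneg[of x] x by auto
    ultimately show "a * u_majorant x + \<delta> * (u x + v x)
        - (\<gamma> x * (b * v_majorant x - \<delta> * (u x + v x)) + (2 * \<delta> - gap_rate * \<gamma> x) * v_majorant x)
      \<le> (\<bar>a\<bar> + 2 * \<delta>) * (u_majorant x - \<gamma> x * v_majorant x)"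
      using cone_growth_bound[of "\<gamma> x" \<delta>] \<gamma>_01[of x] x \<delta>_nonneg by simp
  qed
  then show ?thesis by (simp add: \<gamma>_def)
qed

lemma cone_forward:
  assumes "limit_slope \<le> \<alpha>" "\<alpha> \<le> 1" "u 0 \<le> \<alpha> * v 0"
  shows "u t \<le> cone_slope gap_rate limit_slope \<alpha> t * v t"
  using u_le_majorant[of t] majorants_in_cone[OF assms, of t] t_nonneg by (simp add: v_majorant_t)

lemma unstable_growth:
  assumes "limit_slope \<le> \<alpha>" "\<alpha> \<le> 1" "u 0 \<le> \<alpha> * v 0"
  shows "v 0 \<le> exp ((2 * \<delta> - b) * t) * v t"
proof -
  define h where "h r = exp ((2 * \<delta> - b) * r) * v_majorant r" for r
  have "h 0 \<le> h t"
  proof (rule DERIV_nonneg_imp_increasing_open[OF t_nonneg])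
    show "continuous_on {0..t} h"
      unfolding h_def by (intro continuous_intros continuous_majorants)
    fix x assume x: "0 < x" "x < t"
    have "(h has_real_derivative
        exp ((2 * \<delta> - b) * x) * (\<delta> * (2 * v_majorant x - (u x + v x)))) (at x)"
      unfolding h_def[abs_def] using v_majorant_has_derivative[OF x]
      by (auto intro!: derivative_eq_intros simp: algebra_simps)
    moreover
    \<comment> \<open>\<open>u \<le> u_majorant \<le> v_majorant\<close> by the cone estimate, as the slope stays below 1.\<close>
    have "u x + v x \<le> 2 * v_majorant x"
    proof -
      have "x \<in> {0..t}" using x by auto
      moreover note cone_slope_unit_interval[OF assms(1,2), of x]
      ultimately show ?thesis
        using majorants_in_cone[OF assms, of x] u_le_majorant[of x] v_le_majorant[of x]
          v_nonneg[of x] mult_left_le_one_le[of "v_majorant x"] by fastforce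
    qed
    ultimately show "\<exists>y. (h has_real_derivative y) (at x) \<and> 0 \<le> y"
      using \<delta>_nonneg by auto
  qed
  then show ?thesis
    using v_le_majorant[of 0] t_nonneg by (simp add: h_def v_majorant_t)
qed

lemma cone_backward:
  assumes "limit_slope \<le> \<beta>" "\<beta> \<le> 1" "v t \<le> \<beta> * u t"
  shows "v 0 \<le> cone_slope gap_rate limit_slope \<beta> t * u 0"
proof -
  interpret reversed: scalar_dichotomy "\<lambda>r. v (t - r)" "\<lambda>r. u (t - r)" "- b" "- a" \<delta> t
    by (rule time_reversed)
  show ?thesis using reversed.cone_forward assms by (simp add: algebra_simps)
qed

lemma stable_growth:
  assumes "limit_slope \<le> \<beta>" "\<beta> \<le> 1" "v t \<le> \<beta> * u t"
  shows "u t \<le> exp ((a + 2 * \<delta>) * t) * u 0"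
proof -
  interpret reversed: scalar_dichotomy "\<lambda>r. v (t - r)" "\<lambda>r. u (t - r)" "- b" "- a" \<delta> t
    by (rule time_reversed)
  show ?thesis using reversed.unstable_growth[of \<beta>] assms by (simp add: algebra_simps)
qed

end

section \<open>Differences of solutions of the integral equation\<close>

lemma projc_diff: "projc P w x - projc P w y = projc P w (x - y)"
  by (simp add: projc_def blinfun.diff_right)

lemma norm_le_proj_add_projc:
  fixes P :: "'m \<Rightarrow> ('z::real_normed_vector \<Rightarrow>\<^sub>L 'z)"
  shows "norm x \<le> norm (P w x) + norm (projc P w x)"
  using norm_triangle_ineq[of "P w x" "projc P w x"] by (simp add: projc_def)

locale dichotomy_along_orbit =
  fixes \<phi> :: "real \<Rightarrow> 'm::topological_space \<Rightarrow> 'm"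
    and P :: "'m \<Rightarrow> ('z::banach \<Rightarrow>\<^sub>L 'z)"
    and T1 S1 :: "real \<Rightarrow> 'm \<Rightarrow> ('z \<Rightarrow>\<^sub>L 'z)"
    and f :: "'m \<Rightarrow> 'z \<Rightarrow> 'z"
    and C1 a b E :: real and \<omega> :: 'm
  assumes flow_0: "\<phi> 0 \<omega> = \<omega>"
    and flow_add: "\<And>t s. 0 \<le> t \<Longrightarrow> 0 \<le> s \<Longrightarrow> \<phi> (t + s) \<omega> = \<phi> t (\<phi> s \<omega>)"
    and orbit_cont: "continuous_on {0..} (\<lambda>t. \<phi> t \<omega>)"
    and proj_cont: "continuous_on UNIV (\<lambda>(w, z). P w z)"
    and proj_bound: "\<And>w. norm (P w) \<le> C1"
    and coproj_bound: "\<And>w. norm (id_blinfun - P w) \<le> C1"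
    and T1_bound: "\<And>t r x. 0 \<le> t \<Longrightarrow> 0 \<le> r \<Longrightarrow> x \<in> Xsp P (\<phi> r \<omega>) \<Longrightarrow>
      norm (T1 t (\<phi> r \<omega>) x) \<le> exp (a * t) * norm x"
    and S1_bound: "\<And>t r y. 0 \<le> t \<Longrightarrow> 0 \<le> r \<Longrightarrow> y \<in> Ysp P (\<phi> t (\<phi> r \<omega>)) \<Longrightarrow>
      norm (S1 t (\<phi> r \<omega>) y) \<le> exp (- b * t) * norm y"
    and f_lipschitz: "\<And>r p q. 0 \<le> r \<Longrightarrow> norm (f (\<phi> r \<omega>) p - f (\<phi> r \<omega>) q) \<le> E * norm (p - q)"
    and E_nonneg: "0 \<le> E"
begin

lemma C1_nonneg: "0 \<le> C1"
  using proj_bound[of \<omega>] norm_ge_zero order_trans by blast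

lemma norm_proj_le: "norm (P w x) \<le> C1 * norm x"
  using norm_blinfun[of "P w" x] proj_bound[of w] by (meson mult_right_mono norm_ge_zero order_trans)

lemma norm_coproj_le: "norm (projc P w x) \<le> C1 * norm x"
proof -
  have "norm (projc P w x) = norm ((id_blinfun - P w) x)"
    by (simp add: projc_def blinfun.diff_left)
  also have "\<dots> \<le> C1 * norm x"
    using norm_blinfun[of "id_blinfun - P w" x] coproj_bound[of w]
    by (meson mult_right_mono norm_ge_zero order_trans)
  finally show ?thesis .
qed

lemma orbit_shift: "0 \<le> r \<Longrightarrow> r \<le> q \<Longrightarrow> \<phi> (q - r) (\<phi> r \<omega>) = \<phi> q \<omega>"
  using flow_add[of "q - r" r] by simp

definition stable_distance :: "(real \<Rightarrow> 'z) \<Rightarrow> (real \<Rightarrow> 'z) \<Rightarrow> real \<Rightarrow> real" where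
  "stable_distance z z' r = norm (P (\<phi> r \<omega>) (z r - z' r))"

definition unstable_distance :: "(real \<Rightarrow> 'z) \<Rightarrow> (real \<Rightarrow> 'z) \<Rightarrow> real \<Rightarrow> real" where
  "unstable_distance z z' r = norm (projc P (\<phi> r \<omega>) (z r - z' r))"

lemma f_difference_le:
  assumes "0 \<le> q"
  shows "norm (f (\<phi> q \<omega>) (z q) - f (\<phi> q \<omega>) (z' q)) \<le> E * (stable_distance z z' q + unstable_distance z z' q)"
  using f_lipschitz[OF assms, of "z q" "z' q"] norm_le_proj_add_projc[of "z q - z' q" P "\<phi> q \<omega>"] E_nonneg
  unfolding stable_distance_def unstable_distance_def
  by (meson mult_left_mono order_trans)

lemma continuous_distances:
  assumes "continuous_on {0..t} z" "continuous_on {0..t} z'"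
  shows "continuous_on {0..t} (stable_distance z z')" "continuous_on {0..t} (unstable_distance z z')"
proof -
  have "continuous_on {0..t} (\<lambda>r. (\<phi> r \<omega>, z r - z' r))"
    using continuous_on_subset[OF orbit_cont, of "{0..t}"]
    by (intro continuous_on_Pair continuous_on_diff assms) auto
  then have proj: "continuous_on {0..t} (\<lambda>r. P (\<phi> r \<omega>) (z r - z' r))"
    using continuous_on_compose2[OF proj_cont] by fastforce
  show "continuous_on {0..t} (stable_distance z z')"
    unfolding stable_distance_def[abs_def] by (rule continuous_on_norm[OF proj])
  show "continuous_on {0..t} (unstable_distance z z')"
    unfolding unstable_distance_def[abs_def] projc_def
    by (intro continuous_on_norm continuous_on_diff proj assms)
qed

lemma stable_distance_le:
  assumes z: "is_sol \<phi> P T1 S1 f t \<omega> z" and z': "is_sol \<phi> P T1 S1 f t \<omega> z'" and r: "r \<in> {0..t}"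
  shows "stable_distance z z' r \<le> exp (a * r) * stable_distance z z' 0
    + C1 * E * integral {0..r} (\<lambda>q. exp (a * (r - q)) * (stable_distance z z' q + unstable_distance z z' q))"
proof -
  let ?w = "stable_distance z z'" and ?v = "unstable_distance z z'"
  define F where "F z q = T1 (r - q) (\<phi> q \<omega>) (P (\<phi> q \<omega>) (f (\<phi> q \<omega>) (z q)))" for z q
  define \<Delta> where "\<Delta> = P (\<phi> r \<omega>) (z r - z' r) - T1 r \<omega> (P \<omega> (z 0 - z' 0))"
  have "(F z has_integral P (\<phi> r \<omega>) (z r) - T1 r \<omega> (P \<omega> (z 0))) {0..r}"
    "(F z' has_integral P (\<phi> r \<omega>) (z' r) - T1 r \<omega> (P \<omega> (z' 0))) {0..r}"
    using z z' r unfolding is_sol_def F_def by auto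
  from has_integral_diff[OF this] have "((\<lambda>q. F z q - F z' q) has_integral \<Delta>) {0..r}"
    unfolding \<Delta>_def by (simp add: blinfun.diff_right algebra_simps)
  moreover have "continuous_on {0..r} (\<lambda>q. C1 * E * (exp (a * (r - q)) * (?w q + ?v q)))"
    using continuous_distances[of t z z'] z z' r
    by (intro continuous_intros) (auto simp: is_sol_def intro: continuous_on_subset)
  moreover have "norm (F z q - F z' q) \<le> C1 * E * (exp (a * (r - q)) * (?w q + ?v q))"
    if q: "q \<in> {0..r}" for q
  proof -
    let ?d = "f (\<phi> q \<omega>) (z q) - f (\<phi> q \<omega>) (z' q)"
    have "norm (F z q - F z' q) = norm (T1 (r - q) (\<phi> q \<omega>) (P (\<phi> q \<omega>) ?d))"
      by (simp add: F_def blinfun.diff_right)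
    also have "\<dots> \<le> exp (a * (r - q)) * norm (P (\<phi> q \<omega>) ?d)"
      using q by (intro T1_bound) (auto simp: Xsp_def)
    also have "\<dots> \<le> exp (a * (r - q)) * (C1 * (E * (?w q + ?v q)))"
      using norm_proj_le[of "\<phi> q \<omega>" ?d] f_difference_le[of q z z'] q C1_nonneg
      by (intro mult_left_mono) (auto intro: order_trans mult_left_mono)
    finally show ?thesis by (simp add: algebra_simps)
  qed
  ultimately have "norm \<Delta> \<le> integral {0..r} (\<lambda>q. C1 * E * (exp (a * (r - q)) * (?w q + ?v q)))"
    by (rule norm_has_integral_le_integral)
  then have "norm \<Delta> \<le> C1 * E * integral {0..r} (\<lambda>q. exp (a * (r - q)) * (?w q + ?v q))"
    by simp
  moreover have "norm (T1 r \<omega> (P \<omega> (z 0 - z' 0))) \<le> exp (a * r) * ?w 0"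
    using T1_bound[of r 0 "P \<omega> (z 0 - z' 0)"] r flow_0 by (simp add: Xsp_def stable_distance_def)
  moreover have "?w r \<le> norm (T1 r \<omega> (P \<omega> (z 0 - z' 0))) + norm \<Delta>"
    using norm_triangle_ineq[of "T1 r \<omega> (P \<omega> (z 0 - z' 0))" \<Delta>] by (simp add: \<Delta>_def stable_distance_def)
  ultimately show ?thesis by linarith
qed

lemma unstable_distance_le:
  assumes z: "is_sol \<phi> P T1 S1 f t \<omega> z" and z': "is_sol \<phi> P T1 S1 f t \<omega> z'" and r: "r \<in> {0..t}"
  shows "unstable_distance z z' r \<le> exp (- b * (t - r)) * unstable_distance z z' t
    + C1 * E * integral {r..t} (\<lambda>q. exp (- b * (q - r)) * (stable_distance z z' q + unstable_distance z z' q))"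
proof -
  let ?w = "stable_distance z z'" and ?v = "unstable_distance z z'"
  define G where "G z q = S1 (q - r) (\<phi> r \<omega>) (projc P (\<phi> q \<omega>) (f (\<phi> q \<omega>) (z q)))" for z q
  define \<Delta> where "\<Delta> = S1 (t - r) (\<phi> r \<omega>) (projc P (\<phi> t \<omega>) (z t - z' t)) - projc P (\<phi> r \<omega>) (z r - z' r)"
  have "(G z has_integral S1 (t - r) (\<phi> r \<omega>) (projc P (\<phi> t \<omega>) (z t)) - projc P (\<phi> r \<omega>) (z r)) {r..t}"
    "(G z' has_integral S1 (t - r) (\<phi> r \<omega>) (projc P (\<phi> t \<omega>) (z' t)) - projc P (\<phi> r \<omega>) (z' r)) {r..t}"
    using z z' r unfolding is_sol_def G_def by auto
  from has_integral_diff[OF this] have "((\<lambda>q. G z q - G z' q) has_integral \<Delta>) {r..t}"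
    unfolding \<Delta>_def by (simp add: blinfun.diff_right algebra_simps flip: projc_diff)
  moreover have "continuous_on {r..t} (\<lambda>q. C1 * E * (exp (- b * (q - r)) * (?w q + ?v q)))"
    using continuous_distances[of t z z'] z z' r
    by (intro continuous_intros) (auto simp: is_sol_def intro: continuous_on_subset)
  moreover have "norm (G z q - G z' q) \<le> C1 * E * (exp (- b * (q - r)) * (?w q + ?v q))"
    if q: "q \<in> {r..t}" for q
  proof -
    let ?d = "f (\<phi> q \<omega>) (z q) - f (\<phi> q \<omega>) (z' q)"
    have "norm (G z q - G z' q) = norm (S1 (q - r) (\<phi> r \<omega>) (projc P (\<phi> q \<omega>) ?d))"
      by (simp add: G_def blinfun.diff_right flip: projc_diff)
    also have "\<dots> \<le> exp (- b * (q - r)) * norm (projc P (\<phi> q \<omega>) ?d)"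
      using q r orbit_shift[of r q] by (intro S1_bound) (auto simp: Ysp_def)
    also have "\<dots> \<le> exp (- b * (q - r)) * (C1 * (E * (?w q + ?v q)))"
      using norm_coproj_le[of "\<phi> q \<omega>" ?d] f_difference_le[of q z z'] q r C1_nonneg
      by (intro mult_left_mono) (auto intro: order_trans mult_left_mono)
    finally show ?thesis by (simp add: algebra_simps)
  qed
  ultimately have "norm \<Delta> \<le> integral {r..t} (\<lambda>q. C1 * E * (exp (- b * (q - r)) * (?w q + ?v q)))"
    by (rule norm_has_integral_le_integral)
  then have "norm \<Delta> \<le> C1 * E * integral {r..t} (\<lambda>q. exp (- b * (q - r)) * (?w q + ?v q))"
    by simp
  moreover have "norm (S1 (t - r) (\<phi> r \<omega>) (projc P (\<phi> t \<omega>) (z t - z' t))) \<le> exp (- b * (t - r)) * ?v t"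
    using S1_bound[of "t - r" r "projc P (\<phi> t \<omega>) (z t - z' t)"] r orbit_shift[of r t]
    by (auto simp: Ysp_def unstable_distance_def)
  moreover have "?v r \<le> norm (S1 (t - r) (\<phi> r \<omega>) (projc P (\<phi> t \<omega>) (z t - z' t))) + norm \<Delta>"
    using norm_triangle_ineq4[of "S1 (t - r) (\<phi> r \<omega>) (projc P (\<phi> t \<omega>) (z t - z' t))" \<Delta>]
    by (simp add: \<Delta>_def unstable_distance_def)
  ultimately show ?thesis by linarith
qed

lemma solution_difference_scalar_dichotomy:
  assumes "is_sol \<phi> P T1 S1 f t \<omega> z" "is_sol \<phi> P T1 S1 f t \<omega> z'" "0 \<le> t"
    and "0 < b - a - 2 * (C1 * E)"
  shows "scalar_dichotomy (stable_distance z z') (unstable_distance z z') a b (C1 * E) t"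
  using assms continuous_distances[of t z z'] stable_distance_le[OF assms(1,2)]
    unstable_distance_le[OF assms(1,2)] C1_nonneg E_nonneg
  by unfold_locales (auto simp: is_sol_def stable_distance_def unstable_distance_def)

lemma AB_cond_corr:
  fixes \<alpha> \<alpha>' \<beta> \<beta>' :: real
  defines "\<sigma> \<equiv> b - a - 2 * (C1 * E)"
  assumes t: "0 \<le> t" and gap: "0 < \<sigma>"
    and \<alpha>: "2 * (C1 * E) / \<sigma> \<le> \<alpha>" "\<alpha> \<le> 1" "cone_slope \<sigma> (2 * (C1 * E) / \<sigma>) \<alpha> t \<le> \<alpha>'"
    and \<beta>: "2 * (C1 * E) / \<sigma> \<le> \<beta>" "\<beta> \<le> 1" "cone_slope \<sigma> (2 * (C1 * E) / \<sigma>) \<beta> t \<le> \<beta>'"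
  shows "AB_cond (corr \<phi> P T1 S1 f t \<omega>) \<alpha> \<alpha>' (exp ((2 * (C1 * E) - b) * t)) \<beta> \<beta>' (exp ((a + 2 * (C1 * E)) * t))"
proof -
  have "(norm (x1 - x1') \<le> \<alpha> * norm (y1 - y1') \<longrightarrow>
          norm (x2 - x2') \<le> \<alpha>' * norm (y2 - y2') \<and>
          norm (y1 - y1') \<le> exp ((2 * (C1 * E) - b) * t) * norm (y2 - y2')) \<and>
        (norm (y2 - y2') \<le> \<beta> * norm (x2 - x2') \<longrightarrow>
          norm (y1 - y1') \<le> \<beta>' * norm (x1 - x1') \<and>
          norm (x2 - x2') \<le> exp ((a + 2 * (C1 * E)) * t) * norm (x1 - x1'))"
    if graph: "((x1, y1), (x2, y2)) \<in> corr \<phi> P T1 S1 f t \<omega>" "((x1', y1'), (x2', y2')) \<in> corr \<phi> P T1 S1 f t \<omega>"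
    for x1 y1 x2 y2 x1' y1' x2' y2'
  proof -
    obtain z z' where sol: "is_sol \<phi> P T1 S1 f t \<omega> z" "is_sol \<phi> P T1 S1 f t \<omega> z'"
      and ends: "P \<omega> (z 0) = x1" "projc P \<omega> (z 0) = y1" "P (\<phi> t \<omega>) (z t) = x2" "projc P (\<phi> t \<omega>) (z t) = y2"
        "P \<omega> (z' 0) = x1'" "projc P \<omega> (z' 0) = y1'" "P (\<phi> t \<omega>) (z' t) = x2'" "projc P (\<phi> t \<omega>) (z' t) = y2'"
      using graph unfolding corr_def by blast
    interpret scalar_dichotomy "stable_distance z z'" "unstable_distance z z'" a b "C1 * E" t
      using solution_difference_scalar_dichotomy[OF sol t] gap by (simp add: \<sigma>_def)
    have dist: "stable_distance z z' 0 = norm (x1 - x1')" "unstable_distance z z' 0 = norm (y1 - y1')"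
      "stable_distance z z' t = norm (x2 - x2')" "unstable_distance z z' t = norm (y2 - y2')"
      using ends flow_0
      by (auto simp: stable_distance_def unstable_distance_def blinfun.diff_right simp flip: projc_diff)
    have "0 \<le> norm (y2 - y2')" "0 \<le> norm (x1 - x1')" by simp_all
    then show ?thesis
      using cone_forward[of \<alpha>] unstable_growth[of \<alpha>] cone_backward[of \<beta>] stable_growth[of \<beta>] \<alpha> \<beta>
      unfolding dist \<sigma>_def by (smt (verit) mult_right_mono)
  qed
  then show ?thesis
    unfolding AB_cond_def by blast
qed

end

lemma dichotomy_along_orbit_shifted:
  fixes \<phi> :: "real \<Rightarrow> 'm::topological_space \<Rightarrow> 'm" and P :: "'m \<Rightarrow> ('z::banach \<Rightarrow>\<^sub>L 'z)"
    and T1 S1 :: "real \<Rightarrow> 'm \<Rightarrow> ('z \<Rightarrow>\<^sub>L 'z)"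
  assumes "\<And>w. \<phi> 0 w = w"
    and flow_add: "\<And>t s w. 0 \<le> t \<Longrightarrow> 0 \<le> s \<Longrightarrow> \<phi> (t + s) w = \<phi> t (\<phi> s w)"
    and flow_cont: "continuous_on ({0..} \<times> UNIV) (\<lambda>(t, w). \<phi> t w)"
    and "continuous_on UNIV (\<lambda>(w, z). P w z)"
    and "\<And>w. norm (P w) \<le> C1" and "\<And>w. norm (id_blinfun - P w) \<le> C1"
    and T1_bound: "\<And>t r x. 0 \<le> t \<Longrightarrow> 0 \<le> r \<Longrightarrow> x \<in> Xsp P (\<phi> r \<omega>) \<Longrightarrow>
      norm (T1 t (\<phi> r \<omega>) x) \<le> exp (a * t) * norm x"
    and S1_bound: "\<And>t r y. 0 \<le> t \<Longrightarrow> 0 \<le> r \<Longrightarrow> y \<in> Ysp P (\<phi> t (\<phi> r \<omega>)) \<Longrightarrow>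
      norm (S1 t (\<phi> r \<omega>) y) \<le> exp (- b * t) * norm y"
    and f_lipschitz: "\<And>r. 0 \<le> r \<Longrightarrow> lipschitz_on E UNIV (f (\<phi> r \<omega>))"
    and s: "0 \<le> s"
  shows "dichotomy_along_orbit \<phi> P T1 S1 f C1 a b E (\<phi> s \<omega>)"
proof
  have shift: "\<phi> r (\<phi> s \<omega>) = \<phi> (r + s) \<omega>" if "0 \<le> r" for r
    using flow_add[OF that s] by simp
  have "continuous_on {0..} (\<lambda>t. (\<lambda>(t, w). \<phi> t w) (t, \<phi> s \<omega>))"
    by (rule continuous_on_compose2[OF flow_cont]) (auto intro!: continuous_intros)
  then show "continuous_on {0..} (\<lambda>t. \<phi> t (\<phi> s \<omega>))"
    by simp
  show "norm (T1 t (\<phi> r (\<phi> s \<omega>)) x) \<le> exp (a * t) * norm x"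
    if "0 \<le> t" "0 \<le> r" "x \<in> Xsp P (\<phi> r (\<phi> s \<omega>))" for t r x
    using that T1_bound[of t "r + s" x] s by (simp add: shift)
  show "norm (S1 t (\<phi> r (\<phi> s \<omega>)) y) \<le> exp (- b * t) * norm y"
    if "0 \<le> t" "0 \<le> r" "y \<in> Ysp P (\<phi> t (\<phi> r (\<phi> s \<omega>)))" for t r y
    using that S1_bound[of t "r + s" y] s by (simp add: shift)
  show "norm (f (\<phi> r (\<phi> s \<omega>)) p - f (\<phi> r (\<phi> s \<omega>)) q) \<le> E * norm (p - q)"
    if "0 \<le> r" for r p q
    using f_lipschitz[of "r + s"] that s by (simp add: shift lipschitz_on_normD)
  show "0 \<le> E"
    using f_lipschitz[of 0] by (simp add: lipschitz_on_nonneg)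
qed (use assms in auto)

lemma uniform_cone_conditions:
  fixes G :: "real \<Rightarrow> real \<Rightarrow> 'm \<Rightarrow> (('a::real_normed_vector \<times> 'b::real_normed_vector) \<times>
      ('c::real_normed_vector \<times> 'd::real_normed_vector)) set"
    and e \<sigma> \<mu>s \<mu>u lamu lams :: "'m \<Rightarrow> real"
  assumes e_nonneg: "\<And>\<omega>. 0 \<le> e \<omega>" and \<sigma>_eq: "\<And>\<omega>. \<sigma> \<omega> = \<mu>u \<omega> - \<mu>s \<omega> - e \<omega>"
    and lam_prod: "\<And>\<omega>. lams \<omega> * lamu \<omega> = exp (\<mu>s \<omega> - \<mu>u \<omega> + 2 * e \<omega>)"
    and cone: "\<forall>\<omega> a b t s. e \<omega> / \<sigma> \<omega> \<le> a \<and> a < 1 \<and> e \<omega> / \<sigma> \<omega> \<le> b \<and> b < 1 \<and>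
         0 \<le> t \<and> 0 \<le> s \<longrightarrow>
         AB_cond (G t s \<omega>) a a (lamu \<omega> powr t) b b (lams \<omega> powr t)"
    and contraction: "\<forall>\<omega> a b ka kb \<tau> t s.
         e \<omega> / \<sigma> \<omega> < a \<and> a < 1 \<and> e \<omega> / \<sigma> \<omega> < b \<and> b < 1 \<and>
         0 < \<tau> \<and> \<tau> \<le> t \<and> 0 \<le> s \<and>
         ((\<sigma> \<omega> - e \<omega> / a) * exp (- \<sigma> \<omega> * \<tau>) + e \<omega> / a) / \<sigma> \<omega> \<le> ka \<and> ka < 1 \<and>
         ((\<sigma> \<omega> - e \<omega> / b) * exp (- \<sigma> \<omega> * \<tau>) + e \<omega> / b) / \<sigma> \<omega> \<le> kb \<and> kb < 1 \<longrightarrow>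
         AB_cond (G t s \<omega>) a (ka * a) (lamu \<omega> powr t) b (kb * b) (lams \<omega> powr t)"
    and c: "1 < c" and d: "0 < d" and uniform_gap: "\<And>\<omega>. d \<le> \<mu>u \<omega> - \<mu>s \<omega> - (1 + c) * e \<omega>"
  shows "(\<exists>q<1. \<forall>\<omega>. lams \<omega> * lamu \<omega> \<le> q)
       \<and> (SUP \<omega>. e \<omega> / \<sigma> \<omega>) < 1
       \<and> (\<forall>t s \<omega>. 0 \<le> t \<and> 0 \<le> s \<longrightarrow>
            AB_cond (G t s \<omega>) (SUP w. e w / \<sigma> w) (SUP w. e w / \<sigma> w) (lamu \<omega> powr t)
                              (SUP w. e w / \<sigma> w) (SUP w. e w / \<sigma> w) (lams \<omega> powr t))
       \<and> (\<forall>a b \<epsilon>1. (SUP w. e w / \<sigma> w) < a \<and> a < 1 \<and> (SUP w. e w / \<sigma> w) < b \<and> b < 1 \<and>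
              0 < \<epsilon>1 \<longrightarrow>
            (\<exists>ka kb. ka < 1 \<and> kb < 1 \<and>
               (\<forall>\<omega>. ((\<sigma> \<omega> - e \<omega> / a) * exp (- \<sigma> \<omega> * \<epsilon>1) + e \<omega> / a) / \<sigma> \<omega> \<le> ka \<and>
                     ((\<sigma> \<omega> - e \<omega> / b) * exp (- \<sigma> \<omega> * \<epsilon>1) + e \<omega> / b) / \<sigma> \<omega> \<le> kb) \<and>
               (\<forall>t s \<omega>. \<epsilon>1 \<le> t \<and> 0 \<le> s \<longrightarrow>
                  AB_cond (G t s \<omega>) a (ka * a) (lamu \<omega> powr t) b (kb * b) (lams \<omega> powr t))))"
proof -
  have \<sigma>_ge: "c * e \<omega> + d \<le> \<sigma> \<omega>" for \<omega>
    using uniform_gap[of \<omega>] by (simp add: \<sigma>_eq algebra_simps)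
  have \<sigma>_d: "d \<le> \<sigma> \<omega>" for \<omega>
    using \<sigma>_ge[of \<omega>] c e_nonneg[of \<omega>] by (smt (verit) mult_nonneg_nonneg)
  define m where "m = (SUP w. e w / \<sigma> w)"
  note ratio = uniform_cone_ratio[where e = e and \<sigma> = \<sigma>, OF e_nonneg \<sigma>_ge c d, folded m_def]
  have "lams \<omega> * lamu \<omega> \<le> exp (- d)" for \<omega>
  proof -
    have "\<mu>s \<omega> - \<mu>u \<omega> + 2 * e \<omega> \<le> - d"
      using uniform_gap[of \<omega>] c e_nonneg[of \<omega>] mult_right_mono[of 1 c "e \<omega>"]
      by (simp add: algebra_simps)
    then show ?thesis
      by (simp add: lam_prod)
  qed
  then have "\<exists>q<1. \<forall>\<omega>. lams \<omega> * lamu \<omega> \<le> q"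
    using d by (intro exI[of _ "exp (- d)"]) auto
  moreover have "AB_cond (G t s \<omega>) m m (lamu \<omega> powr t) m m (lams \<omega> powr t)"
    if "0 \<le> t" "0 \<le> s" for t s \<omega>
    using cone[rule_format, where \<omega> = \<omega> and a = m and b = m and t = t and s = s]
      ratio(1)[of \<omega>] ratio(2) that by blast
  moreover have "\<exists>ka kb. ka < 1 \<and> kb < 1 \<and>
       (\<forall>\<omega>. ((\<sigma> \<omega> - e \<omega> / a) * exp (- \<sigma> \<omega> * \<epsilon>1) + e \<omega> / a) / \<sigma> \<omega> \<le> ka \<and>
             ((\<sigma> \<omega> - e \<omega> / b) * exp (- \<sigma> \<omega> * \<epsilon>1) + e \<omega> / b) / \<sigma> \<omega> \<le> kb) \<and>
       (\<forall>t s \<omega>. \<epsilon>1 \<le> t \<and> 0 \<le> s \<longrightarrow>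
          AB_cond (G t s \<omega>) a (ka * a) (lamu \<omega> powr t) b (kb * b) (lams \<omega> powr t))"
    if h: "m < a" "a < 1" "m < b" "b < 1" "0 < \<epsilon>1" for a b \<epsilon>1
  proof -
    obtain ka where ka: "ka < 1"
        "\<And>\<omega>. ((\<sigma> \<omega> - e \<omega> / a) * exp (- \<sigma> \<omega> * \<epsilon>1) + e \<omega> / a) / \<sigma> \<omega> \<le> ka"
      using uniform_contraction_factor[where e = e and \<sigma> = \<sigma>, OF e_nonneg \<sigma>_d d ratio(1) h(1,5)]
      by blast
    obtain kb where kb: "kb < 1"
        "\<And>\<omega>. ((\<sigma> \<omega> - e \<omega> / b) * exp (- \<sigma> \<omega> * \<epsilon>1) + e \<omega> / b) / \<sigma> \<omega> \<le> kb"
      using uniform_contraction_factor[where e = e and \<sigma> = \<sigma>, OF e_nonneg \<sigma>_d d ratio(1) h(3,5)]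
      by blast
    have "e \<omega> / \<sigma> \<omega> < a" "e \<omega> / \<sigma> \<omega> < b" for \<omega>
      using ratio(1)[of \<omega>] h by linarith+
    then show ?thesis
      using ka kb h contraction[rule_format, where \<tau> = \<epsilon>1]
      by (intro exI[of _ ka] exI[of _ kb] conjI allI impI) auto
  qed
  ultimately show ?thesis
    using ratio(2) unfolding m_def by (intro conjI allI impI) blast+
qed

theorem theorem3p12:
  fixes T :: "real \<Rightarrow> ('x::banach \<Rightarrow>\<^sub>L 'x)"
    and S :: "real \<Rightarrow> ('y::banach \<Rightarrow>\<^sub>L 'y)"
    and \<phi> :: "real \<Rightarrow> 'm::t2_space \<Rightarrow> 'm"
    and L :: "'m \<Rightarrow> (('x \<times> 'y) \<Rightarrow>\<^sub>L ('x \<times> 'y))"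
    and f :: "'m \<Rightarrow> ('x \<times> 'y) \<Rightarrow> ('x \<times> 'y)"
    and P :: "'m \<Rightarrow> (('x \<times> 'y) \<Rightarrow>\<^sub>L ('x \<times> 'y))"
    and T1 S1 :: "real \<Rightarrow> 'm \<Rightarrow> (('x \<times> 'y) \<Rightarrow>\<^sub>L ('x \<times> 'y))"
    and C1 :: real
    and \<mu>s \<mu>u :: "'m \<Rightarrow> real"
  defines "eps' \<equiv> (\<lambda>\<omega>. 2 * C1 * (SUP t\<in>{0..}. lipc (f (\<phi> t \<omega>))))"
    and "\<sigma> \<equiv> (\<lambda>\<omega>. \<mu>u \<omega> - \<mu>s \<omega> - 2 * C1 * (SUP t\<in>{0..}. lipc (f (\<phi> t \<omega>))))"
    and "lamu \<equiv> (\<lambda>\<omega>. exp (- \<mu>u \<omega> + 2 * C1 * (SUP t\<in>{0..}. lipc (f (\<phi> t \<omega>)))))"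
    and "lams \<equiv> (\<lambda>\<omega>. exp (\<mu>s \<omega> + 2 * C1 * (SUP t\<in>{0..}. lipc (f (\<phi> t \<omega>)))))"
    and "H \<equiv> corr \<phi> P T1 S1 f"
  assumes
    \<comment> \<open>C_0 semigroup T(t), t \<ge> 0, on X\<close>
    T0: "T 0 = id_blinfun"
    and Tsg: "\<And>t s. 0 \<le> t \<Longrightarrow> 0 \<le> s \<Longrightarrow> T (t + s) = T t o\<^sub>L T s"
    and Tcont: "\<And>x. continuous_on {0..} (\<lambda>t. T t x)"
    \<comment> \<open>C_0 semigroup t \<mapsto> S(-t), t \<ge> 0, on Y\<close>
    and S0: "S 0 = id_blinfun"
    and Ssg: "\<And>t s. 0 \<le> t \<Longrightarrow> 0 \<le> s \<Longrightarrow> S (- (t + s)) = S (- t) o\<^sub>L S (- s)"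
    and Scont: "\<And>y. continuous_on {0..} (\<lambda>t. S (- t) y)"
    \<comment> \<open>continuous semiflow on the Hausdorff space M\<close>
    and phi0: "\<And>\<omega>. \<phi> 0 \<omega> = \<omega>"
    and phisg: "\<And>t s \<omega>. 0 \<le> t \<Longrightarrow> 0 \<le> s \<Longrightarrow> \<phi> (t + s) \<omega> = \<phi> t (\<phi> s \<omega>)"
    and phicont: "continuous_on ({0..} \<times> UNIV) (\<lambda>(t, \<omega>). \<phi> t \<omega>)"
    \<comment> \<open>(D1)\<close>
    and D1cont: "continuous_on UNIV (\<lambda>(\<omega>, z). L \<omega> z)"
    and D1bdd: "\<And>\<omega>. bdd_above ((\<lambda>t. norm (L (\<phi> t \<omega>))) ` {0..})"
    and D1loc: "\<And>\<omega>. \<exists>U. open U \<and> \<omega> \<in> U \<and>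
                    (\<exists>K. \<forall>w\<in>U. (SUP t\<in>{0..}. norm (L (\<phi> t w))) \<le> K)"
    \<comment> \<open>(D2)\<close>
    and D2cont: "continuous_on UNIV (\<lambda>(\<omega>, z). f \<omega> z)"
    and D2lip: "\<And>\<omega>. \<exists>K. \<forall>t\<ge>0. lipschitz_on K UNIV (f (\<phi> t \<omega>))"
    and D2loc: "\<And>\<omega>. \<exists>U. open U \<and> \<omega> \<in> U \<and>
                    (\<exists>K. \<forall>w\<in>U. (SUP t\<in>{0..}. lipc (f (\<phi> t w))) \<le> K)"
    \<comment> \<open>(UD+): (a) projections\<close>
    and Pproj: "\<And>\<omega>. P \<omega> o\<^sub>L P \<omega> = P \<omega>"
    and Pcont: "continuous_on UNIV (\<lambda>(\<omega>, z). P \<omega> z)"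
    \<comment> \<open>(b) the cocycle T1\<close>
    and T1maps: "\<And>t \<omega> x. 0 \<le> t \<Longrightarrow> x \<in> Xsp P \<omega> \<Longrightarrow> T1 t \<omega> x \<in> Xsp P (\<phi> t \<omega>)"
    and T10: "\<And>\<omega> x. x \<in> Xsp P \<omega> \<Longrightarrow> T1 0 \<omega> x = x"
    and T1coc: "\<And>t s \<omega> x. 0 \<le> t \<Longrightarrow> 0 \<le> s \<Longrightarrow> x \<in> Xsp P \<omega> \<Longrightarrow>
                  T1 (t + s) \<omega> x = T1 t (\<phi> s \<omega>) (T1 s \<omega> x)"
    and T1cont: "continuous_on ({0..} \<times> UNIV \<times> UNIV) (\<lambda>(t, \<omega>, z). T1 t \<omega> (P \<omega> z))"
    \<comment> \<open>(b) the operators S1: S1 t \<omega> is S_1(-t, t\<omega>) : Y_{t\<omega>} \<rightarrow> Y_\<omega>\<close>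
    and S1maps: "\<And>t \<omega> y. 0 \<le> t \<Longrightarrow> y \<in> Ysp P (\<phi> t \<omega>) \<Longrightarrow> S1 t \<omega> y \<in> Ysp P \<omega>"
    and S10: "\<And>\<omega> y. y \<in> Ysp P \<omega> \<Longrightarrow> S1 0 \<omega> y = y"
    and S1coc: "\<And>t s \<omega> y. 0 \<le> t \<Longrightarrow> 0 \<le> s \<Longrightarrow> y \<in> Ysp P (\<phi> (t + s) \<omega>) \<Longrightarrow>
                  S1 (t + s) \<omega> y = S1 s \<omega> (S1 t (\<phi> s \<omega>) y)"
    and S1cont: "continuous_on ({0..} \<times> UNIV \<times> UNIV)
                   (\<lambda>(t, \<omega>, z). S1 t \<omega> (projc P (\<phi> t \<omega>) z))"
    \<comment> \<open>(c)\<close>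
    and Pbnd: "\<And>\<omega>. norm (P \<omega>) \<le> C1"
    and Pcbnd: "\<And>\<omega>. norm (id_blinfun - P \<omega>) \<le> C1"
    \<comment> \<open>(d)\<close>
    and T1bnd: "\<And>t r \<omega> x. 0 \<le> t \<Longrightarrow> 0 \<le> r \<Longrightarrow> x \<in> Xsp P (\<phi> r \<omega>) \<Longrightarrow>
                  norm (T1 t (\<phi> r \<omega>) x) \<le> exp (\<mu>s \<omega> * t) * norm x"
    and S1bnd: "\<And>t r \<omega> y. 0 \<le> t \<Longrightarrow> 0 \<le> r \<Longrightarrow> y \<in> Ysp P (\<phi> t (\<phi> r \<omega>)) \<Longrightarrow>
                  norm (S1 t (\<phi> r \<omega>) y) \<le> exp (- \<mu>u \<omega> * t) * norm y"
    \<comment> \<open>(UD+): the linear variation-of-constants relation\<close>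
    and UDlin: "\<And>\<omega> t1 t2 x1 y2 t. 0 \<le> t1 \<Longrightarrow> t1 \<le> t2 \<Longrightarrow>
                  x1 \<in> Xsp P (\<phi> t1 \<omega>) \<Longrightarrow> y2 \<in> Ysp P (\<phi> t2 \<omega>) \<Longrightarrow> t \<in> {t1..t2} \<Longrightarrow>
                  (let z = (\<lambda>r. T1 (r - t1) (\<phi> t1 \<omega>) x1 + S1 (t2 - r) (\<phi> r \<omega>) y2) in
                    ((\<lambda>r. T (t - r) (fst (L (\<phi> r \<omega>) (z r))))
                       has_integral (fst (z t) - T (t - t1) (fst (z t1)))) {t1..t} \<and>
                    ((\<lambda>r. S (t - r) (snd (L (\<phi> r \<omega>) (z r))))
                       has_integral (S (t - t2) (snd (z t2)) - snd (z t))) {t..t2})"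
    \<comment> \<open>gap condition\<close>
    and gap: "\<And>\<omega>. \<mu>u \<omega> - \<mu>s \<omega> - 2 * eps' \<omega> > 0"
  shows
    "(\<forall>\<omega> a b t s. eps' \<omega> / \<sigma> \<omega> \<le> a \<and> a < 1 \<and> eps' \<omega> / \<sigma> \<omega> \<le> b \<and> b < 1 \<and>
         0 \<le> t \<and> 0 \<le> s \<longrightarrow>
         AB_cond (H t (\<phi> s \<omega>)) a a (lamu \<omega> powr t) b b (lams \<omega> powr t))
   \<and> (\<forall>\<omega> a b ka kb \<epsilon>1 t s.
         eps' \<omega> / \<sigma> \<omega> < a \<and> a < 1 \<and> eps' \<omega> / \<sigma> \<omega> < b \<and> b < 1 \<and>
         0 < \<epsilon>1 \<and> \<epsilon>1 \<le> t \<and> 0 \<le> s \<and>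
         ((\<sigma> \<omega> - eps' \<omega> / a) * exp (- \<sigma> \<omega> * \<epsilon>1) + eps' \<omega> / a) / \<sigma> \<omega> \<le> ka \<and> ka < 1 \<and>
         ((\<sigma> \<omega> - eps' \<omega> / b) * exp (- \<sigma> \<omega> * \<epsilon>1) + eps' \<omega> / b) / \<sigma> \<omega> \<le> kb \<and> kb < 1 \<longrightarrow>
         AB_cond (H t (\<phi> s \<omega>)) a (ka * a) (lamu \<omega> powr t) b (kb * b) (lams \<omega> powr t))
   \<and> ((\<exists>c>1. \<exists>\<delta>>0. \<forall>\<omega>. \<mu>u \<omega> - \<mu>s \<omega> - (1 + c) * eps' \<omega> \<ge> \<delta>) \<longrightarrow>
         (\<exists>q<1. \<forall>\<omega>. lams \<omega> * lamu \<omega> \<le> q)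
       \<and> (SUP \<omega>. eps' \<omega> / \<sigma> \<omega>) < 1
       \<and> (\<forall>t s \<omega>. 0 \<le> t \<and> 0 \<le> s \<longrightarrow>
            AB_cond (H t (\<phi> s \<omega>)) (SUP w. eps' w / \<sigma> w) (SUP w. eps' w / \<sigma> w) (lamu \<omega> powr t)
                                     (SUP w. eps' w / \<sigma> w) (SUP w. eps' w / \<sigma> w) (lams \<omega> powr t))
       \<and> (\<forall>a b \<epsilon>1. (SUP w. eps' w / \<sigma> w) < a \<and> a < 1 \<and> (SUP w. eps' w / \<sigma> w) < b \<and> b < 1 \<and>
              0 < \<epsilon>1 \<longrightarrow>
            (\<exists>ka kb. ka < 1 \<and> kb < 1 \<and>
               (\<forall>\<omega>. ((\<sigma> \<omega> - eps' \<omega> / a) * exp (- \<sigma> \<omega> * \<epsilon>1) + eps' \<omega> / a) / \<sigma> \<omega> \<le> ka \<and>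
                     ((\<sigma> \<omega> - eps' \<omega> / b) * exp (- \<sigma> \<omega> * \<epsilon>1) + eps' \<omega> / b) / \<sigma> \<omega> \<le> kb) \<and>
               (\<forall>t s \<omega>. \<epsilon>1 \<le> t \<and> 0 \<le> s \<longrightarrow>
                  AB_cond (H t (\<phi> s \<omega>)) a (ka * a) (lamu \<omega> powr t) b (kb * b) (lams \<omega> powr t)))))"
proof -
  define E where "E \<omega> = (SUP t\<in>{0..}. lipc (f (\<phi> t \<omega>)))" for \<omega>
  have f_lipschitz: "lipschitz_on (E \<omega>) UNIV (f (\<phi> r \<omega>))" if "0 \<le> r" for \<omega> r
  proof -
    obtain K where "\<forall>t\<ge>0. lipschitz_on K UNIV (f (\<phi> t \<omega>))" using D2lip by blast
    then show ?thesis
      unfolding E_def using that by (intro lipschitz_on_SUP_lipc[of "{0..}"]) auto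
  qed
  have E_nonneg: "0 \<le> E \<omega>" for \<omega>
    using f_lipschitz[of 0 \<omega>] by (simp add: lipschitz_on_nonneg)
  have C1_nonneg: "0 \<le> C1"
    using Pbnd norm_ge_zero order_trans by blast
  have eps'_E: "2 * (C1 * E \<omega>) = eps' \<omega>" and \<sigma>_E: "\<mu>u \<omega> - \<mu>s \<omega> - eps' \<omega> = \<sigma> \<omega>" for \<omega>
    by (simp_all add: eps'_def \<sigma>_def E_def)
  have eps'_nonneg: "0 \<le> eps' \<omega>" for \<omega>
    using C1_nonneg E_nonneg by (simp flip: eps'_E)
  have \<sigma>_pos: "0 < \<sigma> \<omega>" for \<omega>
    using gap[of \<omega>] eps'_nonneg[of \<omega>] by (simp flip: \<sigma>_E)
  have AB: "AB_cond (H t (\<phi> s \<omega>)) \<alpha> \<alpha>' (lamu \<omega> powr t) \<beta> \<beta>' (lams \<omega> powr t)"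
    if "0 \<le> s" "0 \<le> t" "eps' \<omega> / \<sigma> \<omega> \<le> \<alpha>" "\<alpha> \<le> 1" "eps' \<omega> / \<sigma> \<omega> \<le> \<beta>" "\<beta> \<le> 1"
      "cone_slope (\<sigma> \<omega>) (eps' \<omega> / \<sigma> \<omega>) \<alpha> t \<le> \<alpha>'" "cone_slope (\<sigma> \<omega>) (eps' \<omega> / \<sigma> \<omega>) \<beta> t \<le> \<beta>'"
    for \<omega> s t \<alpha> \<alpha>' \<beta> \<beta>'
  proof -
    interpret dichotomy_along_orbit \<phi> P T1 S1 f C1 "\<mu>s \<omega>" "\<mu>u \<omega>" "E \<omega>" "\<phi> s \<omega>"
      by (rule dichotomy_along_orbit_shifted)
        (use phi0 phisg phicont Pcont Pbnd Pcbnd T1bnd S1bnd f_lipschitz \<open>0 \<le> s\<close> in auto)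
    have "lamu \<omega> powr t = exp ((2 * (C1 * E \<omega>) - \<mu>u \<omega>) * t)"
      "lams \<omega> powr t = exp ((\<mu>s \<omega> + 2 * (C1 * E \<omega>)) * t)"
      by (simp_all add: lamu_def lams_def exp_powr_real E_def algebra_simps)
    moreover have "\<mu>u \<omega> - \<mu>s \<omega> - 2 * (C1 * E \<omega>) = \<sigma> \<omega>"
      by (simp add: eps'_E \<sigma>_E)
    ultimately show ?thesis
      using AB_cond_corr[of t \<alpha> \<alpha>' \<beta> \<beta>'] that \<sigma>_pos[of \<omega>] by (simp add: H_def eps'_E)
  qed
  have part1: "\<forall>\<omega> a b t s. eps' \<omega> / \<sigma> \<omega> \<le> a \<and> a < 1 \<and> eps' \<omega> / \<sigma> \<omega> \<le> b \<and> b < 1 \<and>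
         0 \<le> t \<and> 0 \<le> s \<longrightarrow>
         AB_cond (H t (\<phi> s \<omega>)) a a (lamu \<omega> powr t) b b (lams \<omega> powr t)"
  proof (intro allI impI)
    fix \<omega> and a b t s :: real
    assume "eps' \<omega> / \<sigma> \<omega> \<le> a \<and> a < 1 \<and> eps' \<omega> / \<sigma> \<omega> \<le> b \<and> b < 1 \<and> 0 \<le> t \<and> 0 \<le> s"
    then show "AB_cond (H t (\<phi> s \<omega>)) a a (lamu \<omega> powr t) b b (lams \<omega> powr t)"
      using \<sigma>_pos[of \<omega>] by (intro AB cone_slope_between(2)) auto
  qed
  have part2: "\<forall>\<omega> a b ka kb \<tau> t s.
         eps' \<omega> / \<sigma> \<omega> < a \<and> a < 1 \<and> eps' \<omega> / \<sigma> \<omega> < b \<and> b < 1 \<and>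
         0 < \<tau> \<and> \<tau> \<le> t \<and> 0 \<le> s \<and>
         ((\<sigma> \<omega> - eps' \<omega> / a) * exp (- \<sigma> \<omega> * \<tau>) + eps' \<omega> / a) / \<sigma> \<omega> \<le> ka \<and> ka < 1 \<and>
         ((\<sigma> \<omega> - eps' \<omega> / b) * exp (- \<sigma> \<omega> * \<tau>) + eps' \<omega> / b) / \<sigma> \<omega> \<le> kb \<and> kb < 1 \<longrightarrow>
         AB_cond (H t (\<phi> s \<omega>)) a (ka * a) (lamu \<omega> powr t) b (kb * b) (lams \<omega> powr t)"
  proof (intro allI impI)
    fix \<omega> and a b ka kb \<tau> t s :: real
    assume "eps' \<omega> / \<sigma> \<omega> < a \<and> a < 1 \<and> eps' \<omega> / \<sigma> \<omega> < b \<and> b < 1 \<and>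
         0 < \<tau> \<and> \<tau> \<le> t \<and> 0 \<le> s \<and>
         ((\<sigma> \<omega> - eps' \<omega> / a) * exp (- \<sigma> \<omega> * \<tau>) + eps' \<omega> / a) / \<sigma> \<omega> \<le> ka \<and> ka < 1 \<and>
         ((\<sigma> \<omega> - eps' \<omega> / b) * exp (- \<sigma> \<omega> * \<tau>) + eps' \<omega> / b) / \<sigma> \<omega> \<le> kb \<and> kb < 1"
    then show "AB_cond (H t (\<phi> s \<omega>)) a (ka * a) (lamu \<omega> powr t) b (kb * b) (lams \<omega> powr t)"
      using \<sigma>_pos[of \<omega>] eps'_nonneg[of \<omega>]
      by (intro AB cone_slope_le_mult[where \<tau> = \<tau>]) auto
  qed
  have "lams \<omega> * lamu \<omega> = exp (\<mu>s \<omega> - \<mu>u \<omega> + 2 * eps' \<omega>)" for \<omega>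
    by (simp add: lams_def lamu_def eps'_def flip: exp_add)
  from uniform_cone_conditions[OF eps'_nonneg \<sigma>_E[symmetric] this part1 part2]
  show ?thesis
    using part1 part2 by blast
qed

end
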